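(* Let $\mathbb{Q}[y,z]$ be the polynomial ring and let $D$ be the unique derivation of $\mathbb{Q}[y,z]$ with $D(y)=z^2$ and $D(z)=yz$ (so that, with $y=\tan x$, $z=\sec x$, $D$ corresponds to $d/dx$). Define integers $R_{n,k}$, $W_{n,k}$, $W^{l}_{n,k}$ by $$D^n(y+z)=\sum_{k=0}^{n}R_{n,k}\,y^{n-k}z^{k+1}\ (n\ge 1),\qquad D^n(y)=\sum_{k=0}^{\lfloor (n-1)/2\rfloor}W_{n,k}\,y^{n-2k-1}z^{2k+2}\ (n\ge 1),\qquad D^n(z)=\sum_{k=0}^{\lfloor n/2\rfloor}W^{l}_{n,k}\,y^{n-2k}z^{2k+1}\ (n\ge 0),$$ with the convention that any of these numbers whose index $k$ lies outside the stated summation range is $0$. Then for $0\le k\le n$: (i) $R_{n+1,k}=(k+1)R_{n,k}+(n-k+2)R_{n,k-2}$ for all $n\ge 1$; (ii) $W_{n,k}=(2k+2)W_{n-1,k}+(n-2k)W_{n-1,k-1}$ for all $n\ge 2$; (iii) $W^{l}_{n,k}=(2k+1)W^{l}_{n-1,k}+(n-2k+1)W^{l}_{n-1,k-1}$ for all $n\ge 1$.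
   Context: The expansions are in the polynomial ring $\mathbb{Q}[y,z]$ (i.e. formally, without using $z^2=1+y^2$). *)

theory Defs imports "HOL-Computational_Algebra.Polynomial" begin

text \<open>Q[y,z] is represented as rat poly poly: outer variable z, inner variable y.\<close>
type_synonym qyz = "rat poly poly"

definition Y :: qyz where "Y = [:[:0, 1:]:]"
definition Z :: qyz where "Z = [:0, 1:]"

definition coeffYZ :: "qyz \<Rightarrow> nat \<Rightarrow> nat \<Rightarrow> rat" where
  "coeffYZ f a b = coeff (coeff f b) a"

definition dY :: "qyz \<Rightarrow> qyz" where "dY f = map_poly pderiv f"
definition dZ :: "qyz \<Rightarrow> qyz" where "dZ f = pderiv f"

definition D :: "qyz \<Rightarrow> qyz" where "D f = Z^2 * dY f + Y * Z * dZ f"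

definition R :: "nat \<Rightarrow> int \<Rightarrow> rat" where
  "R n k = (if 0 \<le> k \<and> k \<le> int n
            then coeffYZ ((D ^^ n) (Y + Z)) (nat (int n - k)) (nat (k + 1)) else 0)"

definition W :: "nat \<Rightarrow> int \<Rightarrow> rat" where
  "W n k = (if 0 \<le> k \<and> 2 * k \<le> int n - 1
            then coeffYZ ((D ^^ n) Y) (nat (int n - 2 * k - 1)) (nat (2 * k + 2)) else 0)"

definition Wl :: "nat \<Rightarrow> int \<Rightarrow> rat" where
  "Wl n k = (if 0 \<le> k \<and> 2 * k \<le> int n
            then coeffYZ ((D ^^ n) Z) (nat (int n - 2 * k)) (nat (2 * k + 1)) else 0)"

end

theory Submission imports Defs begin

text \<open>Comparing coefficients of \<open>y^a z^b\<close> in \<open>D f = z^2 \<partial>f/\<partial>y + y z \<partial>f/\<partial>z\<close> gives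
  \<open>[y^a z^b] D f = (a+1) [y^(a+1) z^(b-2)] f + b [y^(a-1) z^b] f\<close>, which holds for all integers
  \<open>a, b\<close> once coefficients at negative exponents are read as \<open>0\<close>. In particular \<open>D f\<close> has no
  \<open>z^0\<close> terms, so for \<open>n \<ge> 1\<close> the range restrictions in the definitions of \<open>R\<close>, \<open>W\<close>, \<open>W\<^sup>l\<close>
  cut off only zero coefficients. Each recurrence is then the coefficient formula applied to
  \<open>D\<^sup>n\<^sup>+\<^sup>1 = D \<circ> D\<^sup>n\<close>.\<close>

definition coeffYZ_int :: "qyz \<Rightarrow> int \<Rightarrow> int \<Rightarrow> rat" where
  "coeffYZ_int f a b = (if 0 \<le> a \<and> 0 \<le> b then coeffYZ f (nat a) (nat b) else 0)"

lemma coeffYZ_D: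
  "coeffYZ (D f) a b =
     (if 2 \<le> b then of_nat (a + 1) * coeffYZ f (a + 1) (b - 2) else 0) +
     (if 1 \<le> a then of_nat b * coeffYZ f (a - 1) b else 0)"
proof -
  have Z_square: "(Z::qyz)^2 = monom 1 2" by (simp add: Z_def monom_altdef)
  have YZ: "Y * Z = monom [:0, 1:] 1" by (simp add: Y_def Z_def monom_altdef)
  have y_monom: "[:0, 1::rat:] = monom 1 1" by (simp add: monom_altdef)
  have dY_part: "coeff (coeff (Z^2 * dY f) b) a =
      (if 2 \<le> b then of_nat (a + 1) * coeffYZ f (a + 1) (b - 2) else 0)"
    by (simp add: Z_square coeff_monom_mult dY_def coeff_map_poly coeff_pderiv coeffYZ_def)
  have dZ_part: "coeff (coeff (Y * Z * dZ f) b) a =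
      (if 1 \<le> a then of_nat b * coeffYZ f (a - 1) b else 0)"
  proof (cases b)
    case 0
    then show ?thesis by (simp add: YZ coeff_monom_mult)
  next
    case (Suc c)
    then have "coeff (Y * Z * dZ f) b = [:0, 1:] * (of_nat b * coeff f b)"
      by (simp add: YZ coeff_monom_mult dZ_def coeff_pderiv)
    then show ?thesis
      by (simp only: y_monom coeff_monom_mult of_nat_poly coeffYZ_def) simp
  qed
  show ?thesis
    using dY_part dZ_part by (simp add: D_def coeffYZ_def)
qed

lemma coeffYZ_int_D:
  "coeffYZ_int (D f) a b =
     of_int (a + 1) * coeffYZ_int f (a + 1) (b - 2) + of_int b * coeffYZ_int f (a - 1) b"
proof (cases "0 \<le> a \<and> 0 \<le> b")
  case True
  then obtain i j where ij: "a = int i" "b = int j" by (metis nonneg_int_cases)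
  have "nat (b - 2) = j - 2" "nat (a - 1) = i - 1" using ij by auto
  then show ?thesis
    using ij by (simp add: coeffYZ_int_def coeffYZ_D nat_add_distrib)
next
  case False
  then show ?thesis
    by (auto simp: coeffYZ_int_def)
qed

lemma coeffYZ_funpow_D_z0:
  assumes "1 \<le> n"
  shows "coeffYZ ((D ^^ n) f) a 0 = 0"
proof -
  obtain m where "n = Suc m" using assms by (cases n) auto
  then show ?thesis by (simp add: coeffYZ_D)
qed

lemma R_eq_coeffYZ_int:
  assumes "1 \<le> n"
  shows "R n k = coeffYZ_int ((D ^^ n) (Y + Z)) (int n - k) (k + 1)"
  using coeffYZ_funpow_D_z0[OF assms]
  by (auto simp: R_def coeffYZ_int_def intro: arg_cong2[where f = "\<lambda>a b. coeffYZ _ a b"])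

lemma W_eq_coeffYZ_int:
  assumes "1 \<le> n"
  shows "W n k = coeffYZ_int ((D ^^ n) Y) (int n - 2 * k - 1) (2 * k + 2)"
  using coeffYZ_funpow_D_z0[OF assms]
  by (auto simp: W_def coeffYZ_int_def intro: arg_cong2[where f = "\<lambda>a b. coeffYZ _ a b"])

lemma Wl_eq_coeffYZ_int: "Wl n k = coeffYZ_int ((D ^^ n) Z) (int n - 2 * k) (2 * k + 1)"
  by (simp add: Wl_def coeffYZ_int_def)

lemma R_recurrence:
  assumes "1 \<le> n"
  shows "R (n + 1) k = of_int (k + 1) * R n k + of_int (int n - k + 2) * R n (k - 2)"
proof -
  let ?g = "(D ^^ n) (Y + Z)"
  have "R (n + 1) k = coeffYZ_int (D ?g) (int n + 1 - k) (k + 1)"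
    using assms by (simp add: R_eq_coeffYZ_int algebra_simps)
  also have "\<dots> = of_int (int n - k + 2) * coeffYZ_int ?g (int n - k + 2) (k - 1)
                  + of_int (k + 1) * coeffYZ_int ?g (int n - k) (k + 1)"
    unfolding coeffYZ_int_D by (simp add: add_ac diff_diff_eq2)
  also have "\<dots> = of_int (k + 1) * R n k + of_int (int n - k + 2) * R n (k - 2)"
    using assms by (simp add: R_eq_coeffYZ_int algebra_simps)
  finally show ?thesis .
qed

lemma W_recurrence:
  assumes "2 \<le> n"
  shows "W n k = of_int (2 * k + 2) * W (n - 1) k + of_int (int n - 2 * k) * W (n - 1) (k - 1)"
proof -
  let ?g = "(D ^^ (n - 1)) Y"
  have "(D ^^ n) Y = D ?g"
    using assms by (cases n) auto
  then have "W n k = coeffYZ_int (D ?g) (int n - 2 * k - 1) (2 * k + 2)"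
    using assms by (simp add: W_eq_coeffYZ_int)
  also have "\<dots> = of_int (int n - 2 * k) * coeffYZ_int ?g (int n - 2 * k) (2 * k)
                  + of_int (2 * k + 2) * coeffYZ_int ?g (int n - 2 * k - 2) (2 * k + 2)"
    unfolding coeffYZ_int_D by (simp add: algebra_simps)
  finally show ?thesis
    using assms by (simp add: W_eq_coeffYZ_int of_nat_diff algebra_simps)
qed

lemma Wl_recurrence:
  assumes "1 \<le> n"
  shows "Wl n k = of_int (2 * k + 1) * Wl (n - 1) k + of_int (int n - 2 * k + 1) * Wl (n - 1) (k - 1)"
proof -
  let ?g = "(D ^^ (n - 1)) Z"
  have "(D ^^ n) Z = D ?g"
    using assms by (cases n) auto
  then have "Wl n k = coeffYZ_int (D ?g) (int n - 2 * k) (2 * k + 1)"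
    by (simp add: Wl_eq_coeffYZ_int)
  also have "\<dots> = of_int (int n - 2 * k + 1) * coeffYZ_int ?g (int n - 2 * k + 1) (2 * k - 1)
                  + of_int (2 * k + 1) * coeffYZ_int ?g (int n - 2 * k - 1) (2 * k + 1)"
    unfolding coeffYZ_int_D by (simp add: algebra_simps)
  finally show ?thesis
    using assms by (simp add: Wl_eq_coeffYZ_int of_nat_diff algebra_simps)
qed

theorem mainTheorem1:
  shows "(\<forall>n::nat. n \<ge> 1 \<longrightarrow> (\<forall>k::nat. k \<le> n \<longrightarrow>
            R (n + 1) (int k) = of_int (int k + 1) * R n (int k)
                               + of_int (int n - int k + 2) * R n (int k - 2)))
       \<and> (\<forall>n::nat. n \<ge> 2 \<longrightarrow> (\<forall>k::nat. k \<le> n \<longrightarrow>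
            W n (int k) = of_int (2 * int k + 2) * W (n - 1) (int k)
                          + of_int (int n - 2 * int k) * W (n - 1) (int k - 1)))
       \<and> (\<forall>n::nat. n \<ge> 1 \<longrightarrow> (\<forall>k::nat. k \<le> n \<longrightarrow>
            Wl n (int k) = of_int (2 * int k + 1) * Wl (n - 1) (int k)
                           + of_int (int n - 2 * int k + 1) * Wl (n - 1) (int k - 1)))"
  using R_recurrence W_recurrence Wl_recurrence by blast

end
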